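(* Let $G$ be a finite group and let $\chi$ be the character of an irreducible complex representation of $G$ that is realizable over $\mathbb{R}$. Write $\chi\otimes\chi=a_1\chi_1+\cdots+a_q\chi_q$ with positive integers $a_i$ and irreducible characters $\chi_i$ of dimensions $n_i=\chi_i(1)$. Then for every $g\in G$, $$c(g)\le\frac{(a_1/n_1^2)\chi_1(g)+\cdots+(a_q/n_q^2)\chi_q(g)}{a_1n_1+\cdots+a_qn_q},\qquad c(G)\le\frac{a_1/n_1+\cdots+a_q/n_q}{a_1n_1+\cdots+a_qn_q}.$$
   Context: For $g\in G$, $c(g)=|\{(x,y)\in G\times G:[x,y]=g\}|/|G|^2$, and $c(G)=c(1)$. *)

theory Defs
  imports "HOL-Algebra.Group" "Jordan_Normal_Form.Matrix"
begin

definition is_rep :: "('a, 'b) monoid_scheme \<Rightarrow> nat \<Rightarrow> ('a \<Rightarrow> complex mat) \<Rightarrow> bool" where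
  "is_rep G n \<rho> \<longleftrightarrow>
     (\<forall>g\<in>carrier G. \<rho> g \<in> carrier_mat n n) \<and>
     (\<forall>g\<in>carrier G. \<forall>h\<in>carrier G. \<rho> (g \<otimes>\<^bsub>G\<^esub> h) = \<rho> g * \<rho> h) \<and>
     \<rho> \<one>\<^bsub>G\<^esub> = 1\<^sub>m n"

definition is_subspace_vec :: "nat \<Rightarrow> complex vec set \<Rightarrow> bool" where
  "is_subspace_vec n W \<longleftrightarrow> W \<subseteq> carrier_vec n \<and> 0\<^sub>v n \<in> W \<and>
     (\<forall>v\<in>W. \<forall>w\<in>W. v + w \<in> W) \<and> (\<forall>c. \<forall>v\<in>W. c \<cdot>\<^sub>v v \<in> W)"

definition invariant_subspace :: "('a, 'b) monoid_scheme \<Rightarrow> nat \<Rightarrow> ('a \<Rightarrow> complex mat) \<Rightarrow> complex vec set \<Rightarrow> bool" where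
  "invariant_subspace G n \<rho> W \<longleftrightarrow> is_subspace_vec n W \<and>
     (\<forall>g\<in>carrier G. \<forall>w\<in>W. \<rho> g *\<^sub>v w \<in> W)"

definition irreducible_rep :: "('a, 'b) monoid_scheme \<Rightarrow> nat \<Rightarrow> ('a \<Rightarrow> complex mat) \<Rightarrow> bool" where
  "irreducible_rep G n \<rho> \<longleftrightarrow> is_rep G n \<rho> \<and> n > 0 \<and>
     (\<forall>W. invariant_subspace G n \<rho> W \<longrightarrow> W = {0\<^sub>v n} \<or> W = carrier_vec n)"

definition realizable_over_R :: "('a, 'b) monoid_scheme \<Rightarrow> nat \<Rightarrow> ('a \<Rightarrow> complex mat) \<Rightarrow> bool" where
  "realizable_over_R G n \<rho> \<longleftrightarrow>
     (\<exists>P Q. P \<in> carrier_mat n n \<and> Q \<in> carrier_mat n n \<and> P * Q = 1\<^sub>m n \<and> Q * P = 1\<^sub>m n \<and>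
        (\<forall>g\<in>carrier G. \<forall>i<n. \<forall>j<n. (Q * \<rho> g * P) $$ (i, j) \<in> \<real>))"

definition mat_trace :: "complex mat \<Rightarrow> complex" where
  "mat_trace A = (\<Sum>i<dim_row A. A $$ (i, i))"

definition character :: "('a \<Rightarrow> complex mat) \<Rightarrow> 'a \<Rightarrow> complex" where
  "character \<rho> g = mat_trace (\<rho> g)"

definition commutator :: "('a, 'b) monoid_scheme \<Rightarrow> 'a \<Rightarrow> 'a \<Rightarrow> 'a" where
  "commutator G x y = inv\<^bsub>G\<^esub> x \<otimes>\<^bsub>G\<^esub> inv\<^bsub>G\<^esub> y \<otimes>\<^bsub>G\<^esub> x \<otimes>\<^bsub>G\<^esub> y"

definition comm_prob :: "('a, 'b) monoid_scheme \<Rightarrow> 'a \<Rightarrow> real" where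
  "comm_prob G g = real (card {(x, y). x \<in> carrier G \<and> y \<in> carrier G \<and> commutator G x y = g})
                   / real (card (carrier G)) ^ 2"

end

theory Submission
  imports Defs "Jordan_Normal_Form.Spectral_Radius"
begin

(* For an irreducible representation rho of degree n with character chi, Schur's lemma makes
   every average  sum_x rho(x^-1) A rho(x)  the scalar matrix (|G| tr A / n) 1.  Taking A = rho(y)
   gives  sum_x chi(g [x,y]^-1) = (|G|/n) chi(y) chi(g y^-1),  and the orthogonality of matrix
   coefficients (the case of elementary A) gives  sum_y chi(y) chi(g y^-1) = (|G|/n) chi(g);
   hence  sum_{x,y} chi(g [x,y]^-1) = (|G|/n)^2 chi(g)  for every irreducible chi.
   If chi is real, then |chi|^2 = chi * chi = sum_i a_i chi_i, so
   sum_{x,y} |chi(g [x,y]^-1)|^2 = |G|^2 sum_i (a_i / n_i^2) chi_i(g).  In this sum of nonnegative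
   terms every pair with [x,y] = g contributes |chi(1)|^2 = n^2, and n^2 = sum_i a_i n_i. *)

lemma index_mult_mat_sum:
  assumes "A \<in> carrier_mat n m" "B \<in> carrier_mat m p" "i < n" "j < p"
  shows "(A * B) $$ (i, j) = (\<Sum>k<m. A $$ (i, k) * B $$ (k, j))"
  using assms by (auto simp: scalar_prod_def atLeast0LessThan intro!: sum.cong)

lemma mat_trace_mult_comm:
  assumes "A \<in> carrier_mat n m" "B \<in> carrier_mat m n"
  shows "mat_trace (A * B) = mat_trace (B * A)"
proof -
  have "mat_trace (A * B) = (\<Sum>i<n. \<Sum>k<m. A $$ (i, k) * B $$ (k, i))"
    using assms by (simp add: mat_trace_def index_mult_mat_sum[of A n m B n] del: index_mult_mat(1))
  also have "\<dots> = (\<Sum>k<m. \<Sum>i<n. B $$ (k, i) * A $$ (i, k))"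
    by (subst sum.swap) (simp add: mult.commute)
  also have "\<dots> = mat_trace (B * A)"
    using assms by (simp add: mat_trace_def index_mult_mat_sum[of B m n A m] del: index_mult_mat(1))
  finally show ?thesis .
qed

lemma mat_trace_conjugate:
  assumes "P \<in> carrier_mat n n" "Q \<in> carrier_mat n n" "A \<in> carrier_mat n n" "Q * P = 1\<^sub>m n"
  shows "mat_trace (P * A * Q) = mat_trace A"
proof -
  have "mat_trace (P * A * Q) = mat_trace (P * (A * Q))"
    using assms by (simp add: assoc_mult_mat[of _ n n _ n _ n])
  also have "\<dots> = mat_trace (A * Q * P)"
    using assms by (simp add: mat_trace_mult_comm[of P n n])
  also have "\<dots> = mat_trace A"
    using assms by (simp add: assoc_mult_mat[of _ n n _ n _ n])
  finally show ?thesis .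
qed

lemma mat_trace_smult: "A \<in> carrier_mat n n \<Longrightarrow> mat_trace (c \<cdot>\<^sub>m A) = c * mat_trace A"
  by (simp add: mat_trace_def sum_distrib_left)

(* Matrices of varying dimension form no comm_monoid_add, so sums of n x n matrices are
   taken entrywise. *)
definition mat_sum :: "nat \<Rightarrow> 'c set \<Rightarrow> ('c \<Rightarrow> 'a::comm_monoid_add mat) \<Rightarrow> 'a mat" where
  "mat_sum n S M = mat n n (\<lambda>(i, j). \<Sum>x\<in>S. M x $$ (i, j))"

lemma mat_sum_carrier [simp]: "mat_sum n S M \<in> carrier_mat n n"
  by (simp add: mat_sum_def)

lemma dim_mat_sum [simp]: "dim_row (mat_sum n S M) = n" "dim_col (mat_sum n S M) = n"
  by (simp_all add: mat_sum_def)

lemma index_mat_sum: "i < n \<Longrightarrow> j < n \<Longrightarrow> mat_sum n S M $$ (i, j) = (\<Sum>x\<in>S. M x $$ (i, j))"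
  by (simp add: mat_sum_def)

lemma mat_sum_cong: "(\<And>x. x \<in> S \<Longrightarrow> M x = M' x) \<Longrightarrow> mat_sum n S M = mat_sum n S M'"
  by (simp add: mat_sum_def)

lemma mat_sum_reindex_bij_betw:
  "bij_betw h T S \<Longrightarrow> mat_sum n T (\<lambda>x. M (h x)) = mat_sum n S M"
  unfolding mat_sum_def by (intro eq_matI) (auto intro: sum.reindex_bij_betw)

lemma mat_sum_mult_right:
  fixes M :: "'c \<Rightarrow> 'a::comm_semiring_0 mat"
  assumes "\<And>x. x \<in> S \<Longrightarrow> M x \<in> carrier_mat n n" "P \<in> carrier_mat n n"
  shows "mat_sum n S M * P = mat_sum n S (\<lambda>x. M x * P)"
proof (rule eq_matI)
  fix i j assume "i < dim_row (mat_sum n S (\<lambda>x. M x * P))" "j < dim_col (mat_sum n S (\<lambda>x. M x * P))"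
  then have ij: "i < n" "j < n" by auto
  have "(mat_sum n S M * P) $$ (i, j) = (\<Sum>k<n. (\<Sum>x\<in>S. M x $$ (i, k)) * P $$ (k, j))"
    using assms ij
    by (simp add: index_mult_mat_sum[of _ n n _ n] index_mat_sum del: index_mult_mat(1))
  also have "\<dots> = (\<Sum>x\<in>S. \<Sum>k<n. M x $$ (i, k) * P $$ (k, j))"
    by (simp add: sum_distrib_right sum.swap[of _ "{..<n}"])
  also have "\<dots> = mat_sum n S (\<lambda>x. M x * P) $$ (i, j)"
    using assms ij
    by (simp add: index_mult_mat_sum[of _ n n _ n] index_mat_sum del: index_mult_mat(1))
  finally show "(mat_sum n S M * P) $$ (i, j) = mat_sum n S (\<lambda>x. M x * P) $$ (i, j)" .
qed (use assms in auto)

lemma mat_sum_mult_left: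
  fixes M :: "'c \<Rightarrow> 'a::comm_semiring_0 mat"
  assumes "\<And>x. x \<in> S \<Longrightarrow> M x \<in> carrier_mat n n" "P \<in> carrier_mat n n"
  shows "P * mat_sum n S M = mat_sum n S (\<lambda>x. P * M x)"
proof (rule eq_matI)
  fix i j assume "i < dim_row (mat_sum n S (\<lambda>x. P * M x))" "j < dim_col (mat_sum n S (\<lambda>x. P * M x))"
  then have ij: "i < n" "j < n" by auto
  have "(P * mat_sum n S M) $$ (i, j) = (\<Sum>k<n. P $$ (i, k) * (\<Sum>x\<in>S. M x $$ (k, j)))"
    using assms ij
    by (simp add: index_mult_mat_sum[of _ n n _ n] index_mat_sum del: index_mult_mat(1))
  also have "\<dots> = (\<Sum>x\<in>S. \<Sum>k<n. P $$ (i, k) * M x $$ (k, j))"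
    by (simp add: sum_distrib_left sum.swap[of _ "{..<n}"])
  also have "\<dots> = mat_sum n S (\<lambda>x. P * M x) $$ (i, j)"
    using assms ij
    by (simp add: index_mult_mat_sum[of _ n n _ n] index_mat_sum del: index_mult_mat(1))
  finally show "(P * mat_sum n S M) $$ (i, j) = mat_sum n S (\<lambda>x. P * M x) $$ (i, j)" .
qed (use assms in auto)

lemma mat_trace_mat_sum:
  assumes "\<And>x. x \<in> S \<Longrightarrow> M x \<in> carrier_mat n n"
  shows "mat_trace (mat_sum n S M) = (\<Sum>x\<in>S. mat_trace (M x))"
proof -
  have "mat_trace (mat_sum n S M) = (\<Sum>i<n. \<Sum>x\<in>S. M x $$ (i, i))"
    by (simp add: mat_trace_def index_mat_sum)
  also have "\<dots> = (\<Sum>x\<in>S. mat_trace (M x))"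
    using assms by (subst sum.swap) (auto simp: mat_trace_def intro!: sum.cong)
  finally show ?thesis .
qed

lemma sum_mat_trace_mult_scalar_mat_sum:
  assumes M: "\<And>x. x \<in> S \<Longrightarrow> M x \<in> carrier_mat n n" and P: "P \<in> carrier_mat n n"
    and scalar: "mat_sum n S M = c \<cdot>\<^sub>m 1\<^sub>m n"
  shows "(\<Sum>x\<in>S. mat_trace (P * M x)) = c * mat_trace P"
proof -
  have "(\<Sum>x\<in>S. mat_trace (P * M x)) = mat_trace (mat_sum n S (\<lambda>x. P * M x))"
    using M P by (simp add: mat_trace_mat_sum[of _ _ n])
  also have "\<dots> = mat_trace (P * (c \<cdot>\<^sub>m 1\<^sub>m n))"
    using mat_sum_mult_left[of S M n P, OF M P] by (simp add: scalar)
  also have "\<dots> = c * mat_trace P"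
    using P by (simp add: mult_smult_distrib[of P n n "1\<^sub>m n" n] mat_trace_smult[of _ n])
  finally show ?thesis .
qed

lemma elementary_mat_mult_index:
  fixes P :: "'a::comm_ring_1 mat"
  assumes "P \<in> carrier_mat n n" "Q \<in> carrier_mat n n" "i < n" "j < n" "k < n" "l < n"
  shows "(P * mat n n (\<lambda>(a, b). if a = j \<and> b = k then 1 else 0) * Q) $$ (i, l)
         = P $$ (i, j) * Q $$ (k, l)"
proof -
  have PE: "P * mat n n (\<lambda>(a, b). if a = j \<and> b = k then 1 else 0)
      = mat n n (\<lambda>(a, b). if b = k then P $$ (a, j) else 0)"
    using assms by (intro eq_matI) (auto simp flip: unit_vec_def zero_vec_def)
  show ?thesis
    using assms by (simp add: PE index_mult_mat_sum[of _ n n Q n] if_distrib[of "\<lambda>x. x * _"]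
        del: index_mult_mat(1) cong: if_cong)
qed

lemma is_repD:
  assumes "is_rep G n \<rho>"
  shows is_rep_carrier: "g \<in> carrier G \<Longrightarrow> \<rho> g \<in> carrier_mat n n"
    and is_rep_mult: "g \<in> carrier G \<Longrightarrow> h \<in> carrier G \<Longrightarrow> \<rho> (g \<otimes>\<^bsub>G\<^esub> h) = \<rho> g * \<rho> h"
    and is_rep_one: "\<rho> \<one>\<^bsub>G\<^esub> = 1\<^sub>m n"
    and is_rep_dim: "g \<in> carrier G \<Longrightarrow> dim_row (\<rho> g) = n" "g \<in> carrier G \<Longrightarrow> dim_col (\<rho> g) = n"
  using assms by (auto simp: is_rep_def)

lemma (in group) is_rep_inv:
  assumes "is_rep G n \<rho>" "g \<in> carrier G"
  shows "\<rho> (inv g) * \<rho> g = 1\<^sub>m n" "\<rho> g * \<rho> (inv g) = 1\<^sub>m n"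
  using assms(2) is_rep_mult[OF assms(1), of "inv g" g] is_rep_mult[OF assms(1), of g "inv g"]
    is_rep_one[OF assms(1)] by simp_all

lemma character_one: "is_rep G n \<rho> \<Longrightarrow> character \<rho> \<one>\<^bsub>G\<^esub> = of_nat n"
  by (simp add: is_rep_one character_def mat_trace_def)

lemma character_real_if_realizable:
  assumes "is_rep G n \<rho>" "realizable_over_R G n \<rho>" "h \<in> carrier G"
  shows "character \<rho> h \<in> \<real>"
proof -
  obtain P Q where PQ: "P \<in> carrier_mat n n" "Q \<in> carrier_mat n n" "P * Q = 1\<^sub>m n"
    and real: "\<forall>i<n. \<forall>j<n. (Q * \<rho> h * P) $$ (i, j) \<in> \<real>"
    using assms(2,3) unfolding realizable_over_R_def by blast
  have "character \<rho> h = mat_trace (Q * \<rho> h * P)"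
    using mat_trace_conjugate[OF PQ(2,1) is_rep_carrier[OF assms(1,3)] PQ(3)]
    by (simp add: character_def)
  also have "\<dots> \<in> \<real>"
    using PQ is_rep_carrier[OF assms(1,3)] real by (auto simp: mat_trace_def)
  finally show ?thesis .
qed

lemma eigenspace_invariant_subspace:
  assumes rep: "is_rep G n \<rho>" and A: "A \<in> carrier_mat n n"
    and comm: "\<And>g. g \<in> carrier G \<Longrightarrow> A * \<rho> g = \<rho> g * A"
  shows "invariant_subspace G n \<rho> {v \<in> carrier_vec n. A *\<^sub>v v = c \<cdot>\<^sub>v v}"
proof -
  define E where "E = {v \<in> carrier_vec n. A *\<^sub>v v = c \<cdot>\<^sub>v v}"
  have "is_subspace_vec n E"
    unfolding is_subspace_vec_def
  proof (intro conjI ballI allI)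
    fix v w assume "v \<in> E" "w \<in> E"
    then show "v + w \<in> E"
      unfolding E_def using A by (auto simp: mult_add_distrib_mat_vec smult_add_distrib_vec)
  next
    fix d v assume "v \<in> E"
    then show "d \<cdot>\<^sub>v v \<in> E"
      unfolding E_def using A by (auto simp: mult_mat_vec smult_smult_assoc mult.commute)
  qed (use A in \<open>auto simp: E_def\<close>)
  moreover have "\<rho> g *\<^sub>v v \<in> E" if g: "g \<in> carrier G" and v: "v \<in> E" for g v
  proof -
    have R: "\<rho> g \<in> carrier_mat n n" using is_rep_carrier[OF rep g] .
    have v': "v \<in> carrier_vec n" "A *\<^sub>v v = c \<cdot>\<^sub>v v" using v by (auto simp: E_def)
    have "A *\<^sub>v (\<rho> g *\<^sub>v v) = (\<rho> g * A) *\<^sub>v v" using A R v' by (simp flip: comm[OF g])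
    also have "\<dots> = c \<cdot>\<^sub>v (\<rho> g *\<^sub>v v)" using A R v' by (simp add: mult_mat_vec)
    finally show ?thesis using R v' by (auto simp: E_def)
  qed
  ultimately show ?thesis unfolding invariant_subspace_def E_def by blast
qed

lemma irreducible_rep_commuting_scalar:
  assumes irr: "irreducible_rep G n \<rho>" and A: "A \<in> carrier_mat n n"
    and comm: "\<And>g. g \<in> carrier G \<Longrightarrow> A * \<rho> g = \<rho> g * A"
  shows "\<exists>c. A = c \<cdot>\<^sub>m 1\<^sub>m n"
proof -
  have n: "n > 0" and rep: "is_rep G n \<rho>" using irr by (auto simp: irreducible_rep_def)
  obtain c where "eigenvalue A c"
    using spectrum_non_empty[OF A n] by (auto simp: spectrum_def)
  then obtain v where v: "v \<in> carrier_vec n" "v \<noteq> 0\<^sub>v n" "A *\<^sub>v v = c \<cdot>\<^sub>v v"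
    using A by (auto simp: eigenvalue_def eigenvector_def)
  let ?E = "{v \<in> carrier_vec n. A *\<^sub>v v = c \<cdot>\<^sub>v v}"
  have "?E = carrier_vec n"
    using irr eigenspace_invariant_subspace[OF rep A comm, of c] v
    unfolding irreducible_rep_def by blast
  then have unit: "A *\<^sub>v unit_vec n j = c \<cdot>\<^sub>v unit_vec n j" for j
    using unit_vec_carrier by blast
  have "A = c \<cdot>\<^sub>m 1\<^sub>m n"
  proof (rule eq_matI)
    fix i j assume "i < dim_row (c \<cdot>\<^sub>m 1\<^sub>m n)" "j < dim_col (c \<cdot>\<^sub>m 1\<^sub>m n)"
    then have ij: "i < n" "j < n" by auto
    have "A $$ (i, j) = (A *\<^sub>v unit_vec n j) $ i"
      using A ij by simp
    then show "A $$ (i, j) = (c \<cdot>\<^sub>m 1\<^sub>m n) $$ (i, j)"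
      using ij unit by simp
  qed (use A in auto)
  then show ?thesis ..
qed

definition rep_average ::
    "('a, 'b) monoid_scheme \<Rightarrow> nat \<Rightarrow> ('a \<Rightarrow> complex mat) \<Rightarrow> complex mat \<Rightarrow> complex mat"
  where
  "rep_average G n \<rho> A = mat_sum n (carrier G) (\<lambda>x. \<rho> (inv\<^bsub>G\<^esub> x) * A * \<rho> x)"

lemma (in group) bij_betw_mult_right: "g \<in> carrier G \<Longrightarrow> bij_betw (\<lambda>x. x \<otimes> g) (carrier G) (carrier G)"
  by (rule bij_betw_byWitness[where f'="\<lambda>x. x \<otimes> inv g"]) (auto simp: m_assoc)

lemma rep_average_carrier [simp]: "rep_average G n \<rho> A \<in> carrier_mat n n"
  by (simp add: rep_average_def)

lemma (in group) rep_average_commutes: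
  assumes rep: "is_rep G n \<rho>" and A: "A \<in> carrier_mat n n" and g: "g \<in> carrier G"
  shows "rep_average G n \<rho> A * \<rho> g = \<rho> g * rep_average G n \<rho> A"
proof -
  note R = is_rep_carrier[OF rep]
  let ?B = "rep_average G n \<rho> A" and ?M = "\<lambda>x. \<rho> (inv x) * A * \<rho> x"
  have BR: "?B * \<rho> g \<in> carrier_mat n n"
    by (rule mult_carrier_mat[OF rep_average_carrier R[OF g]])
  have shift: "?M (x \<otimes> g) = \<rho> (inv g) * (?M x * \<rho> g)" if x: "x \<in> carrier G" for x
    using x g A R[of x] R[of g] R[of "inv x"] R[of "inv g"]
    by (simp add: inv_mult_group is_rep_mult[OF rep] assoc_mult_mat[of _ n n _ n _ n])
  have "?B = mat_sum n (carrier G) (\<lambda>x. ?M (x \<otimes> g))"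
    unfolding rep_average_def
    by (rule mat_sum_reindex_bij_betw[of "\<lambda>x. x \<otimes> g" "carrier G" "carrier G" n ?M, symmetric])
      (rule bij_betw_mult_right[OF g])
  also have "\<dots> = mat_sum n (carrier G) (\<lambda>x. \<rho> (inv g) * (?M x * \<rho> g))"
    by (rule mat_sum_cong) (rule shift)
  also have "\<dots> = \<rho> (inv g) * mat_sum n (carrier G) (\<lambda>x. ?M x * \<rho> g)"
    by (rule mat_sum_mult_left[symmetric]) (use A R g in \<open>auto intro!: mult_carrier_mat\<close>)
  also have "\<dots> = \<rho> (inv g) * (?B * \<rho> g)"
    unfolding rep_average_def
    by (subst mat_sum_mult_right) (use A R g in \<open>auto intro!: mult_carrier_mat\<close>)
  finally have "\<rho> g * ?B = \<rho> g * (\<rho> (inv g) * (?B * \<rho> g))"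
    by simp
  also have "\<dots> = (\<rho> g * \<rho> (inv g)) * (?B * \<rho> g)"
    using assoc_mult_mat[OF R[OF g] R[OF inv_closed[OF g]] BR] by simp
  also have "\<dots> = ?B * \<rho> g"
    using left_mult_one_mat[OF BR] by (simp add: is_rep_inv[OF rep g])
  finally show ?thesis ..
qed

lemma (in group) rep_average_irreducible:
  assumes irr: "irreducible_rep G n \<rho>" and A: "A \<in> carrier_mat n n"
  shows "rep_average G n \<rho> A = (of_nat (card (carrier G)) * mat_trace A / of_nat n) \<cdot>\<^sub>m 1\<^sub>m n"
proof -
  have rep: "is_rep G n \<rho>" and n: "n > 0" using irr by (auto simp: irreducible_rep_def)
  note R = is_rep_carrier[OF rep]
  obtain c where c: "rep_average G n \<rho> A = c \<cdot>\<^sub>m 1\<^sub>m n"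
    using irreducible_rep_commuting_scalar[OF irr rep_average_carrier]
      rep_average_commutes[OF rep A] by blast
  have "of_nat n * c = mat_trace (rep_average G n \<rho> A)"
    by (simp add: c mat_trace_def)
  also have "\<dots> = (\<Sum>x\<in>carrier G. mat_trace (\<rho> (inv x) * A * \<rho> x))"
    unfolding rep_average_def using A R
    by (subst mat_trace_mat_sum[of _ _ n]) (auto intro!: mult_carrier_mat)
  also have "\<dots> = of_nat (card (carrier G)) * mat_trace A"
    using A R by (simp add: mat_trace_conjugate[of _ n] is_rep_inv[OF rep])
  finally have "c = of_nat (card (carrier G)) * mat_trace A / of_nat n"
    using n by (simp add: field_simps)
  then show ?thesis
    by (simp add: c)
qed

lemma (in group) rep_coefficient_orthogonality:
  assumes irr: "irreducible_rep G n \<rho>"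
    and "i < n" "j < n" "k < n" "l < n"
  shows "(\<Sum>y\<in>carrier G. \<rho> (inv y) $$ (i, j) * \<rho> y $$ (k, l))
         = (if i = l \<and> j = k then of_nat (card (carrier G)) / of_nat n else 0)"
proof -
  have rep: "is_rep G n \<rho>" using irr by (simp add: irreducible_rep_def)
  define E :: "complex mat" where "E = mat n n (\<lambda>(a, b). if a = j \<and> b = k then 1 else 0)"
  have E: "E \<in> carrier_mat n n" by (simp add: E_def)
  have trace_E: "mat_trace E = (if j = k then 1 else 0)"
    using assms by (simp add: E_def mat_trace_def)
  have "(\<Sum>y\<in>carrier G. \<rho> (inv y) $$ (i, j) * \<rho> y $$ (k, l)) = rep_average G n \<rho> E $$ (i, l)"
    using assms is_rep_carrier[OF rep]
    by (simp add: rep_average_def index_mat_sum E_def elementary_mat_mult_index)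
  also have "\<dots> = (if i = l \<and> j = k then of_nat (card (carrier G)) / of_nat n else 0)"
    using assms by (simp add: rep_average_irreducible[OF irr E] trace_E)
  finally show ?thesis .
qed

lemma (in group) mat_sum_character_smult_inv:
  assumes irr: "irreducible_rep G n \<rho>"
  shows "mat_sum n (carrier G) (\<lambda>y. character \<rho> y \<cdot>\<^sub>m \<rho> (inv y))
         = (of_nat (card (carrier G)) / of_nat n) \<cdot>\<^sub>m 1\<^sub>m n"
proof (rule eq_matI)
  have rep: "is_rep G n \<rho>" using irr by (simp add: irreducible_rep_def)
  fix i j assume "i < dim_row ((of_nat (card (carrier G)) / of_nat n) \<cdot>\<^sub>m 1\<^sub>m n)"
    "j < dim_col ((of_nat (card (carrier G)) / of_nat n) \<cdot>\<^sub>m 1\<^sub>m n)"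
  then have ij: "i < n" "j < n" by auto
  have "mat_sum n (carrier G) (\<lambda>y. character \<rho> y \<cdot>\<^sub>m \<rho> (inv y)) $$ (i, j)
      = (\<Sum>y\<in>carrier G. \<Sum>k<n. \<rho> (inv y) $$ (i, j) * \<rho> y $$ (k, k))"
    using ij by (simp add: index_mat_sum character_def mat_trace_def is_rep_dim[OF rep]
        sum_distrib_left mult.commute)
  also have "\<dots> = (\<Sum>k<n. if i = k \<and> j = k then of_nat (card (carrier G)) / of_nat n else 0)"
    using ij by (subst sum.swap) (simp add: rep_coefficient_orthogonality[OF irr])
  also have "\<dots> = ((of_nat (card (carrier G)) / of_nat n) \<cdot>\<^sub>m 1\<^sub>m n) $$ (i, j)"
    using ij by auto
  finally show "mat_sum n (carrier G) (\<lambda>y. character \<rho> y \<cdot>\<^sub>m \<rho> (inv y)) $$ (i, j)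
      = ((of_nat (card (carrier G)) / of_nat n) \<cdot>\<^sub>m 1\<^sub>m n) $$ (i, j)" .
qed auto

lemma (in group) character_convolution:
  assumes irr: "irreducible_rep G n \<rho>" and g: "g \<in> carrier G"
  shows "(\<Sum>y\<in>carrier G. character \<rho> y * character \<rho> (g \<otimes> inv y))
         = of_nat (card (carrier G)) / of_nat n * character \<rho> g"
proof -
  have rep: "is_rep G n \<rho>" using irr by (simp add: irreducible_rep_def)
  note R = is_rep_carrier[OF rep]
  have "character \<rho> y * character \<rho> (g \<otimes> inv y) = mat_trace (\<rho> g * (character \<rho> y \<cdot>\<^sub>m \<rho> (inv y)))"
    if y: "y \<in> carrier G" for y
    using g y R[of g] R[of "inv y"]
    by (simp add: character_def is_rep_mult[OF rep] mult_smult_distrib[of _ n n _ n]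
        mat_trace_smult[of _ n])
  then have "(\<Sum>y\<in>carrier G. character \<rho> y * character \<rho> (g \<otimes> inv y))
      = (\<Sum>y\<in>carrier G. mat_trace (\<rho> g * (character \<rho> y \<cdot>\<^sub>m \<rho> (inv y))))"
    by simp
  also have "\<dots> = of_nat (card (carrier G)) / of_nat n * mat_trace (\<rho> g)"
    by (rule sum_mat_trace_mult_scalar_mat_sum[OF _ _ mat_sum_character_smult_inv[OF irr]])
      (use R g in auto)
  finally show ?thesis
    by (simp add: character_def)
qed

lemma (in group) sum_character_commutator:
  assumes irr: "irreducible_rep G n \<rho>" and g: "g \<in> carrier G"
  shows "(\<Sum>x\<in>carrier G. \<Sum>y\<in>carrier G. character \<rho> (g \<otimes> inv (commutator G x y)))
         = (of_nat (card (carrier G)) / of_nat n) ^ 2 * character \<rho> g"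
proof -
  have rep: "is_rep G n \<rho>" using irr by (simp add: irreducible_rep_def)
  note R = is_rep_carrier[OF rep]
  let ?c = "of_nat (card (carrier G)) / of_nat n :: complex"
  have inner: "(\<Sum>x\<in>carrier G. character \<rho> (g \<otimes> inv (commutator G x y)))
      = ?c * (character \<rho> y * character \<rho> (g \<otimes> inv y))" if y: "y \<in> carrier G" for y
  proof -
    have "g \<otimes> inv (commutator G x y) = (g \<otimes> inv y) \<otimes> (inv x \<otimes> y \<otimes> x)" if x: "x \<in> carrier G" for x
      using g x y by (simp add: commutator_def inv_mult_group m_assoc)
    then have "(\<Sum>x\<in>carrier G. character \<rho> (g \<otimes> inv (commutator G x y)))
        = (\<Sum>x\<in>carrier G. mat_trace (\<rho> (g \<otimes> inv y) * (\<rho> (inv x) * \<rho> y * \<rho> x)))"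
      using g y by (simp add: character_def is_rep_mult[OF rep])
    also have "\<dots> = of_nat (card (carrier G)) * mat_trace (\<rho> y) / of_nat n
        * mat_trace (\<rho> (g \<otimes> inv y))"
      by (rule sum_mat_trace_mult_scalar_mat_sum)
        (use g y R rep_average_irreducible[OF irr R[OF y]]
          in \<open>auto simp: rep_average_def intro!: mult_carrier_mat\<close>)
    finally show ?thesis
      by (simp add: character_def)
  qed
  have "(\<Sum>x\<in>carrier G. \<Sum>y\<in>carrier G. character \<rho> (g \<otimes> inv (commutator G x y)))
      = (\<Sum>y\<in>carrier G. ?c * (character \<rho> y * character \<rho> (g \<otimes> inv y)))"
    by (subst sum.swap) (simp add: inner)
  also have "\<dots> = ?c ^ 2 * character \<rho> g"
    unfolding sum_distrib_left[symmetric] character_convolution[OF irr g]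
    by (simp add: power2_eq_square)
  finally show ?thesis .
qed

lemma (in group) comm_prob_mult_le_sum_norm_character:
  assumes fin: "finite (carrier G)" and rep: "is_rep G n \<rho>" and g: "g \<in> carrier G"
  shows "comm_prob G g * (real (card (carrier G)) ^ 2 * real n ^ 2)
         \<le> (\<Sum>x\<in>carrier G. \<Sum>y\<in>carrier G. cmod (character \<rho> (g \<otimes> inv (commutator G x y))) ^ 2)"
proof -
  define S where "S = {(x, y). x \<in> carrier G \<and> y \<in> carrier G \<and> commutator G x y = g}"
  let ?f = "\<lambda>(x, y). cmod (character \<rho> (g \<otimes> inv (commutator G x y))) ^ 2"
  have S: "S \<subseteq> carrier G \<times> carrier G" by (auto simp: S_def)
  have "card (carrier G) > 0" using fin by (auto simp: card_gt_0_iff)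
  then have "comm_prob G g * (real (card (carrier G)) ^ 2 * real n ^ 2)
      = real (card S) * real n ^ 2"
    by (simp add: comm_prob_def S_def)
  also have "\<dots> = (\<Sum>p\<in>S. ?f p)"
    using g by (simp add: S_def character_one[OF rep] split_beta)
  also have "\<dots> \<le> (\<Sum>p\<in>carrier G \<times> carrier G. ?f p)"
    by (rule sum_mono2) (use fin S in auto)
  also have "\<dots> = (\<Sum>x\<in>carrier G. \<Sum>y\<in>carrier G. ?f (x, y))"
    by (simp add: sum.cartesian_product)
  finally show ?thesis by simp
qed

lemma (in group) sum_norm_square_real_character_commutator:
  assumes rep: "is_rep G n \<rho>" and real: "realizable_over_R G n \<rho>"
    and irrs: "\<forall>i<q. irreducible_rep G (ns i) (\<rho>s i)"
    and dec: "\<forall>h\<in>carrier G. character \<rho> h * character \<rho> h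
                = (\<Sum>i<q. of_nat (a i) * character (\<rho>s i) h)"
    and g: "g \<in> carrier G"
  shows "complex_of_real
           (\<Sum>x\<in>carrier G. \<Sum>y\<in>carrier G. cmod (character \<rho> (g \<otimes> inv (commutator G x y))) ^ 2)
         = of_nat (card (carrier G)) ^ 2
           * (\<Sum>i<q. complex_of_real (real (a i) / real (ns i) ^ 2) * character (\<rho>s i) g)"
proof -
  let ?h = "\<lambda>x y. g \<otimes> inv (commutator G x y)"
  have square: "complex_of_real (cmod (character \<rho> h)) ^ 2
      = (\<Sum>i<q. of_nat (a i) * character (\<rho>s i) h)" if h: "h \<in> carrier G" for h
  proof -
    obtain r where r: "character \<rho> h = complex_of_real r"
      using character_real_if_realizable[OF rep real h] Reals_cases by blast
    have "complex_of_real (cmod (character \<rho> h)) ^ 2 = complex_of_real (r ^ 2)"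
      by (simp add: r flip: of_real_power)
    then show ?thesis
      using dec[rule_format, OF h] by (simp add: r power2_eq_square)
  qed
  have "complex_of_real (\<Sum>x\<in>carrier G. \<Sum>y\<in>carrier G. cmod (character \<rho> (?h x y)) ^ 2)
      = (\<Sum>x\<in>carrier G. \<Sum>y\<in>carrier G. \<Sum>i<q. of_nat (a i) * character (\<rho>s i) (?h x y))"
    using g by (simp add: square commutator_def)
  also have "\<dots> = (\<Sum>i<q. of_nat (a i)
      * (\<Sum>x\<in>carrier G. \<Sum>y\<in>carrier G. character (\<rho>s i) (?h x y)))"
    by (subst sum.swap) (simp add: sum.swap[where B="{..<q}"] sum_distrib_left)
  also have "\<dots> = (\<Sum>i<q. of_nat (a i)
      * ((of_nat (card (carrier G)) / of_nat (ns i)) ^ 2 * character (\<rho>s i) g))"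
    by (simp add: sum_character_commutator[OF irrs[rule_format] g])
  also have "\<dots> = of_nat (card (carrier G)) ^ 2
      * (\<Sum>i<q. complex_of_real (real (a i) / real (ns i) ^ 2) * character (\<rho>s i) g)"
    by (simp add: sum_distrib_left power_divide mult_ac)
  finally show ?thesis .
qed

lemma (in group) sum_mult_degrees_eq_square:
  assumes rep: "is_rep G n \<rho>" and irrs: "\<forall>i<q. irreducible_rep G (ns i) (\<rho>s i)"
    and dec: "\<forall>h\<in>carrier G. character \<rho> h * character \<rho> h
                = (\<Sum>i<q. of_nat (a i) * character (\<rho>s i) h)"
  shows "(\<Sum>i<q. real (a i) * real (ns i)) = real n ^ 2"
proof -
  have "\<And>i. i < q \<Longrightarrow> character (\<rho>s i) \<one> = of_nat (ns i)"
    using irrs by (auto simp: irreducible_rep_def intro: character_one)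
  then have "complex_of_real (\<Sum>i<q. real (a i) * real (ns i)) = complex_of_real (real n ^ 2)"
    using dec[rule_format, OF one_closed] by (simp add: character_one[OF rep] power2_eq_square)
  then show ?thesis
    by (simp only: of_real_eq_iff)
qed

lemma (in group) comm_prob_le_character_sum:
  assumes fin: "finite (carrier G)" and irr: "irreducible_rep G n \<rho>"
    and real: "realizable_over_R G n \<rho>" and irrs: "\<forall>i<q. irreducible_rep G (ns i) (\<rho>s i)"
    and dec: "\<forall>h\<in>carrier G. character \<rho> h * character \<rho> h
                = (\<Sum>i<q. of_nat (a i) * character (\<rho>s i) h)"
    and g: "g \<in> carrier G"
  shows "(\<Sum>i<q. complex_of_real (real (a i) / real (ns i) ^ 2) * character (\<rho>s i) g) \<in> \<real>
         \<and> comm_prob G g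
             \<le> Re (\<Sum>i<q. complex_of_real (real (a i) / real (ns i) ^ 2) * character (\<rho>s i) g)
                / (\<Sum>i<q. real (a i) * real (ns i))"
proof -
  have rep: "is_rep G n \<rho>" and n: "n > 0" using irr by (auto simp: irreducible_rep_def)
  have N: "card (carrier G) > 0" using fin by (auto simp: card_gt_0_iff)
  let ?F = "\<Sum>i<q. complex_of_real (real (a i) / real (ns i) ^ 2) * character (\<rho>s i) g"
  define R where
    "R = (\<Sum>x\<in>carrier G. \<Sum>y\<in>carrier G. cmod (character \<rho> (g \<otimes> inv (commutator G x y))) ^ 2)"
  have F: "?F = complex_of_real (R / real (card (carrier G)) ^ 2)"
    using sum_norm_square_real_character_commutator[OF rep real irrs dec g] N
    by (simp add: R_def field_simps)
  have "comm_prob G g \<le> R / real (card (carrier G)) ^ 2 / real n ^ 2"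
    using comm_prob_mult_le_sum_norm_character[OF fin rep g] N n by (simp add: R_def field_simps)
  then show ?thesis
    unfolding F sum_mult_degrees_eq_square[OF rep irrs dec] by simp
qed

theorem corollary6:
  fixes G :: "('a, 'b) monoid_scheme" and n :: nat and \<rho> :: "'a \<Rightarrow> complex mat"
    and q :: nat and a :: "nat \<Rightarrow> nat" and ns :: "nat \<Rightarrow> nat"
    and \<rho>s :: "nat \<Rightarrow> 'a \<Rightarrow> complex mat"
  assumes "group G" and "finite (carrier G)"
    and "irreducible_rep G n \<rho>" and "realizable_over_R G n \<rho>"
    and "\<forall>i<q. irreducible_rep G (ns i) (\<rho>s i)"
    and "\<forall>i<q. a i > 0"
    and "\<forall>i<q. \<forall>j<q. i \<noteq> j \<longrightarrow> (\<exists>g\<in>carrier G. character (\<rho>s i) g \<noteq> character (\<rho>s j) g)"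
    and "\<forall>g\<in>carrier G. character \<rho> g * character \<rho> g
           = (\<Sum>i<q. of_nat (a i) * character (\<rho>s i) g)"
  shows "(\<forall>g\<in>carrier G.
           (\<Sum>i<q. complex_of_real (real (a i) / real (ns i) ^ 2) * character (\<rho>s i) g) \<in> \<real> \<and>
           comm_prob G g \<le> Re (\<Sum>i<q. complex_of_real (real (a i) / real (ns i) ^ 2) * character (\<rho>s i) g)
                              / (\<Sum>i<q. real (a i) * real (ns i)))
         \<and> comm_prob G \<one>\<^bsub>G\<^esub> \<le> (\<Sum>i<q. real (a i) / real (ns i)) / (\<Sum>i<q. real (a i) * real (ns i))"
proof -
  interpret group G by fact
  note bound = comm_prob_le_character_sum[OF assms(2-5,8)]
  have "(\<Sum>i<q. complex_of_real (real (a i) / real (ns i) ^ 2) * character (\<rho>s i) \<one>\<^bsub>G\<^esub>)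
      = complex_of_real (\<Sum>i<q. real (a i) / real (ns i))"
  proof -
    have "character (\<rho>s i) \<one>\<^bsub>G\<^esub> = of_nat (ns i)" "ns i > 0" if "i < q" for i
      using assms(5) that by (auto simp: irreducible_rep_def intro: character_one)
    then show ?thesis
      by (simp add: power2_eq_square)
  qed
  then show ?thesis
    using bound bound[OF one_closed] by auto
qed

end
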